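(* Let $G=(V,E)$ be a finite, connected, simple graph with at least two vertices and generic weights $(w_x)_{x\in\Sigma}$, $\Sigma=V\cup E$; let $M$ be the ground state and let $S\subset\Sigma$ be such that no element of $S$ belongs to $M$. Consider new weights $w'_y\ge w_y$ for $y\in S$ and $w'_y=w_y$ for $y\notin S$. Then the ground state for the new weights is still $M$, and for every $x\in\Sigma$ the flexibility $F_G(x)$ computed with the new weights is at least the flexibility $F_G(x)$ computed with the old weights.
   Context: A matching of $G$ is a set $M\subset\Sigma$ such that every vertex either belongs to $M$ or is an endpoint of exactly one edge of $M$, but not both. $H(M)=\sum_{z\in M}w_z$; the ground state is the matching minimising $H$. Weights are generic if no nontrivial integer combination of finitely many weights vanishes. For $x\in\Sigma$, $M_{G,x,1}$ (resp. $M_{G,x,0}$) is the minimal-weight matching among those containing $x$ (resp. not containing $x$); $K_{G,x}=H(M_{G,x,0})-H(M_{G,x,1})+w_x$ and the flexibility is $F_G(x)=|K_{G,x}-w_x|$, all relative to the given weights. *)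

theory Defs
  imports Complex_Main
begin

text \<open>Elements of Sigma = V \<union> E: vertices and edges (edges are 2-element vertex sets).\<close>
datatype 'v elem = Vtx 'v | Edg "'v set"

definition simple_graph :: "'v set \<Rightarrow> 'v set set \<Rightarrow> bool" where
  "simple_graph V E \<longleftrightarrow> finite V \<and>
     (\<forall>e\<in>E. \<exists>u v. e = {u, v} \<and> u \<noteq> v \<and> u \<in> V \<and> v \<in> V)"

definition connected_graph :: "'v set \<Rightarrow> 'v set set \<Rightarrow> bool" where
  "connected_graph V E \<longleftrightarrow>
     (\<forall>u\<in>V. \<forall>v\<in>V. (u, v) \<in> {(a, b). {a, b} \<in> E}\<^sup>*)"

definition elems :: "'v set \<Rightarrow> 'v set set \<Rightarrow> 'v elem set" where
  "elems V E = Vtx ` V \<union> Edg ` E"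

text \<open>A matching (monomer-dimer configuration): every vertex is covered exactly once,
  either by itself (as a monomer in M) or by exactly one edge of M.\<close>
definition matching :: "'v set \<Rightarrow> 'v set set \<Rightarrow> 'v elem set \<Rightarrow> bool" where
  "matching V E M \<longleftrightarrow> M \<subseteq> elems V E \<and>
     (\<forall>v\<in>V. (if Vtx v \<in> M then 1 else 0) + card {e. Edg e \<in> M \<and> v \<in> e} = (1::nat))"

definition H :: "('v elem \<Rightarrow> real) \<Rightarrow> 'v elem set \<Rightarrow> real" where
  "H w M = (\<Sum>z\<in>M. w z)"

definition generic :: "'v elem set \<Rightarrow> ('v elem \<Rightarrow> real) \<Rightarrow> bool" where
  "generic S w \<longleftrightarrow> (\<forall>c :: 'v elem \<Rightarrow> int. (\<exists>x\<in>S. c x \<noteq> 0) \<longrightarrow>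
      (\<Sum>x\<in>S. of_int (c x) * w x) \<noteq> 0)"

definition ground_state :: "'v set \<Rightarrow> 'v set set \<Rightarrow> ('v elem \<Rightarrow> real) \<Rightarrow> 'v elem set \<Rightarrow> bool" where
  "ground_state V E w M \<longleftrightarrow> matching V E M \<and>
     (\<forall>N. matching V E N \<and> N \<noteq> M \<longrightarrow> H w M < H w N)"

definition H1 :: "'v set \<Rightarrow> 'v set set \<Rightarrow> ('v elem \<Rightarrow> real) \<Rightarrow> 'v elem \<Rightarrow> real" where
  "H1 V E w x = Min {H w N | N. matching V E N \<and> x \<in> N}"

definition H0 :: "'v set \<Rightarrow> 'v set set \<Rightarrow> ('v elem \<Rightarrow> real) \<Rightarrow> 'v elem \<Rightarrow> real" where
  "H0 V E w x = Min {H w N | N. matching V E N \<and> x \<notin> N}"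

definition K :: "'v set \<Rightarrow> 'v set set \<Rightarrow> ('v elem \<Rightarrow> real) \<Rightarrow> 'v elem \<Rightarrow> real" where
  "K V E w x = H0 V E w x - H1 V E w x + w x"

definition flex :: "'v set \<Rightarrow> 'v set set \<Rightarrow> ('v elem \<Rightarrow> real) \<Rightarrow> 'v elem \<Rightarrow> real" where
  "flex V E w x = \<bar>K V E w x - w x\<bar>"

end

theory Submission
  imports Defs
begin

text \<open>Raising weights only off the ground state M raises every energy and keeps that of M, so M
  stays the ground state. Hence for x \<in> M the constrained minimum H1 is still H(M), while H0 can
  only grow and stays above H(M), so the flexibility H0 - H1 grows; symmetrically for x \<notin> M.\<close>

lemma finite_elems:
  assumes "simple_graph V E"
  shows "finite (elems V E)"
proof -
  have "finite V" and "E \<subseteq> Pow V"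
    using assms unfolding simple_graph_def by auto
  then have "finite E"
    by (meson finite_Pow_iff finite_subset)
  with \<open>finite V\<close> show ?thesis
    unfolding elems_def by simp
qed

lemma matching_subset_elems: "matching V E N \<Longrightarrow> N \<subseteq> elems V E"
  unfolding matching_def by simp

lemma finite_matchings:
  assumes "simple_graph V E"
  shows "finite {N. matching V E N \<and> P N}"
proof (rule finite_subset)
  show "{N. matching V E N \<and> P N} \<subseteq> Pow (elems V E)"
    using matching_subset_elems by blast
  show "finite (Pow (elems V E))"
    using finite_elems[OF assms] by simp
qed

lemma H_mono:
  assumes "N \<subseteq> A" and "\<forall>z\<in>A. w z \<le> w' z"
  shows "H w N \<le> H w' N"
  unfolding H_def using assms by (auto intro: sum_mono)

lemma H_cong:
  assumes "\<forall>z\<in>N. w' z = w z"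
  shows "H w' N = H w N"
  unfolding H_def using assms by simp

lemma ground_state_less:
  "ground_state V E w M \<Longrightarrow> matching V E N \<Longrightarrow> N \<noteq> M \<Longrightarrow> H w M < H w N"
  unfolding ground_state_def by simp

lemma ground_state_le:
  assumes "ground_state V E w M" and "matching V E N"
  shows "H w M \<le> H w N"
  using ground_state_less[OF assms] by (cases "N = M") auto

lemma ground_state_raise_weights:
  assumes gs: "ground_state V E w M"
    and le: "\<forall>z\<in>elems V E. w z \<le> w' z" and eq: "\<forall>z\<in>M. w' z = w z"
  shows "ground_state V E w' M"
  unfolding ground_state_def
proof (intro conjI allI impI)
  show M: "matching V E M"
    using gs unfolding ground_state_def by simp
  fix N
  assume N: "matching V E N \<and> N \<noteq> M"
  have "H w' M = H w M"
    using eq by (rule H_cong)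
  also have "\<dots> < H w N"
    using ground_state_less[OF gs] N by blast
  also have "\<dots> \<le> H w' N"
    using H_mono[OF matching_subset_elems le] N by simp
  finally show "H w' M < H w' N" .
qed

lemma abs_Min_image_diff_mono:
  fixes f g :: "'a \<Rightarrow> real"
  assumes "finite A" and "\<forall>a\<in>A. c \<le> f a \<and> f a \<le> g a"
  shows "\<bar>Min (f ` A) - c\<bar> \<le> \<bar>Min (g ` A) - c\<bar>"
proof (cases "A = {}")
  case False
  have "c \<le> Min (f ` A)"
    using assms False by simp
  moreover have "Min (f ` A) \<le> Min (g ` A)"
    using assms False by (auto simp: Min_le_iff)
  ultimately show ?thesis by simp
qed simp \<comment> \<open>for A = {} both sides are the same junk value Min {}\<close>

lemma H1_eq_Min_image: "H1 V E w x = Min (H w ` {N. matching V E N \<and> x \<in> N})"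
  unfolding H1_def by (simp add: setcompr_eq_image)

lemma H0_eq_Min_image: "H0 V E w x = Min (H w ` {N. matching V E N \<and> x \<notin> N})"
  unfolding H0_def by (simp add: setcompr_eq_image)

lemma ground_state_min_energy:
  assumes "simple_graph V E" and "ground_state V E w M" and "P M"
  shows "Min (H w ` {N. matching V E N \<and> P N}) = H w M"
proof (rule Min_eqI)
  show "finite (H w ` {N. matching V E N \<and> P N})"
    using finite_matchings[OF assms(1)] by simp
  show "H w M \<in> H w ` {N. matching V E N \<and> P N}"
    using assms(2,3) unfolding ground_state_def by blast
qed (use assms(2) ground_state_le in blast)

lemma flex_ground_state:
  assumes "simple_graph V E" and "ground_state V E w M"
  shows "flex V E w x =
    (if x \<in> M then \<bar>H0 V E w x - H w M\<bar> else \<bar>H1 V E w x - H w M\<bar>)"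
  using ground_state_min_energy[OF assms, of "\<lambda>N. x \<in> N"]
    ground_state_min_energy[OF assms, of "\<lambda>N. x \<notin> N"]
  unfolding flex_def K_def H0_eq_Min_image H1_eq_Min_image by auto

lemma flex_mono_common_ground_state:
  assumes "simple_graph V E"
    and gs: "ground_state V E w M" and gs': "ground_state V E w' M"
    and "H w' M = H w M" and "\<forall>N. matching V E N \<longrightarrow> H w N \<le> H w' N"
  shows "flex V E w x \<le> flex V E w' x"
proof -
  have "\<bar>Min (H w ` {N. matching V E N \<and> P N}) - H w M\<bar>
      \<le> \<bar>Min (H w' ` {N. matching V E N \<and> P N}) - H w M\<bar>" for P
    using finite_matchings[OF assms(1)] assms(5) gs ground_state_le
    by (intro abs_Min_image_diff_mono) auto
  then show ?thesis
    unfolding flex_ground_state[OF assms(1) gs] flex_ground_state[OF assms(1) gs']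
      H0_eq_Min_image H1_eq_Min_image assms(4)
    by simp
qed

theorem lemma2p13:
  fixes V :: "'v set" and E :: "'v set set"
    and w w' :: "'v elem \<Rightarrow> real" and M S :: "'v elem set"
  assumes "simple_graph V E" and "connected_graph V E" and "card V \<ge> 2"
    and "generic (elems V E) w"
    and "ground_state V E w M"
    and "S \<subseteq> elems V E" and "S \<inter> M = {}"
    and "\<forall>y\<in>S. w' y \<ge> w y"
    and "\<forall>y\<in>elems V E - S. w' y = w y"
  shows "ground_state V E w' M \<and> (\<forall>x\<in>elems V E. flex V E w' x \<ge> flex V E w x)"
proof -
  have le: "\<forall>z\<in>elems V E. w z \<le> w' z"
    using assms(8,9) by force
  have eq: "\<forall>z\<in>M. w' z = w z"
    using assms(5,7,9) matching_subset_elems unfolding ground_state_def by blast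
  have gs': "ground_state V E w' M"
    using assms(5) le eq by (rule ground_state_raise_weights)
  moreover have "flex V E w x \<le> flex V E w' x" for x
  proof (rule flex_mono_common_ground_state[OF assms(1,5) gs'])
    show "H w' M = H w M"
      using eq by (rule H_cong)
    show "\<forall>N. matching V E N \<longrightarrow> H w N \<le> H w' N"
      using H_mono[OF matching_subset_elems le] by simp
  qed
  ultimately show ?thesis by simp
qed

end
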